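(* Let $R$ be a ring, $n\ge 2$, and let $A=(a_{ij})\in\mathbb{M}_n(R)$ be a matrix such that $a_{i+1,i}=1$ for $1\le i\le n-1$ and $a_{ij}=0$ whenever $i>j+1$ (the entries $a_{ij}$ with $i\le j$ are arbitrary). Then for each $k=1,\dots,n$, the entries of $A^k=(b_{ij})$ satisfy: $b_{k+j-1,\,j}=a_{jj}+a_{j+1,j+1}+\cdots+a_{j+k-1,j+k-1}$ for $1\le j\le n-k+1$; $b_{k+j,\,j}=1$ for $1\le j\le n-k$; and $b_{ij}=0$ whenever $i>k+j$. In particular, the $(k,1)$-entry of $A^k$ is $a_{11}+\cdots+a_{kk}$, and the $(n,1)$-entry of $A^n$ is $a_{11}+\cdots+a_{nn}$.
   Context: All rings are associative with identity; $\mathbb{M}_n(R)$ denotes the ring of $n\times n$ matrices over $R$. *)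

theory Defs
  imports "Jordan_Normal_Form.Matrix"
begin

end

theory Submission
  imports Defs
begin

text \<open>A matrix with unit subdiagonal and zeros below it has lower bandwidth 1, and lower bandwidths
  add up under multiplication, so A^k vanishes below its k-th subdiagonal. Just inside this band an
  entry of A^k * A involves only two terms of the product, one of them weighted by a subdiagonal 1
  of A; induction on k then shows that the k-th subdiagonal of A^k is constantly 1 and that the
  entries of the (k-1)-th are consecutive sums of k diagonal entries of A.\<close>

definition lower_bandwidth_le :: "'a :: zero mat \<Rightarrow> nat \<Rightarrow> bool" where
  "lower_bandwidth_le B k \<longleftrightarrow>
     (\<forall>i j. i < dim_row B \<and> j < dim_col B \<and> i > k + j \<longrightarrow> B $$ (i, j) = 0)"

lemma index_mult_mat_sum:
  fixes A B :: "'a :: semiring_0 mat"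
  assumes "A \<in> carrier_mat n n" "B \<in> carrier_mat n n" "i < n" "j < n"
  shows "(B * A) $$ (i, j) = (\<Sum>l<n. B $$ (i, l) * A $$ (l, j))"
  using assms by (simp add: scalar_prod_def atLeast0LessThan)

lemma lower_bandwidth_le_mult:
  fixes A B :: "'a :: semiring_0 mat"
  assumes A: "A \<in> carrier_mat n n" and B: "B \<in> carrier_mat n n"
    and bB: "lower_bandwidth_le B k" and bA: "lower_bandwidth_le A m"
  shows "lower_bandwidth_le (B * A) (k + m)"
  unfolding lower_bandwidth_le_def
proof (intro allI impI)
  fix i j assume ij: "i < dim_row (B * A) \<and> j < dim_col (B * A) \<and> k + m + j < i"
  have "B $$ (i, l) * A $$ (l, j) = 0" if "l < n" for l
  proof (cases "l > m + j")
    case True then show ?thesis using bA A ij that by (simp add: lower_bandwidth_le_def)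
  next
    case False then show ?thesis using bB A B ij that by (simp add: lower_bandwidth_le_def)
  qed
  then show "(B * A) $$ (i, j) = 0" using index_mult_mat_sum[OF A B] A B ij by simp
qed

lemma lower_bandwidth_le_pow:
  fixes A :: "'a :: semiring_1 mat"
  assumes A: "A \<in> carrier_mat n n" and bA: "lower_bandwidth_le A 1"
  shows "lower_bandwidth_le (A ^\<^sub>m k) k"
proof (induction k)
  case 0
  show ?case by (simp add: lower_bandwidth_le_def)
next
  case (Suc k)
  then show ?case using lower_bandwidth_le_mult[OF A _ Suc bA] A by simp
qed

text \<open>Below row k + j of column j the factor B vanishes, and below row j + 1 the factor A does.\<close>

lemma mult_lower_bandwidth_1_entry:
  fixes A B :: "'a :: semiring_0 mat"
  assumes A: "A \<in> carrier_mat n n" and B: "B \<in> carrier_mat n n"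
    and bB: "lower_bandwidth_le B k" and bA: "lower_bandwidth_le A 1"
    and "i < n" "j + 1 < n" "k + j \<le> i"
  shows "(B * A) $$ (i, j) = B $$ (i, j) * A $$ (j, j) + B $$ (i, j + 1) * A $$ (j + 1, j)"
proof -
  have "(B * A) $$ (i, j) = (\<Sum>l<n. B $$ (i, l) * A $$ (l, j))"
    using index_mult_mat_sum[OF A B] assms by simp
  also have "\<dots> = (\<Sum>l\<in>{j, j + 1}. B $$ (i, l) * A $$ (l, j))"
  proof -
    have "B $$ (i, l) * A $$ (l, j) = 0" if "l \<in> {..<n} - {j, j + 1}" for l
    proof (cases "l < j")
      case True then show ?thesis using bB B assms that by (simp add: lower_bandwidth_le_def)
    next
      case False then show ?thesis using bA A assms that by (simp add: lower_bandwidth_le_def)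
    qed
    then show ?thesis using assms by (intro sum.mono_neutral_right) auto
  qed
  finally show ?thesis by simp
qed

context
  fixes A :: "'a :: ring_1 mat" and n :: nat
  assumes carr: "A \<in> carrier_mat n n"
    and sub: "\<And>i. i + 1 < n \<Longrightarrow> A $$ (i + 1, i) = 1"
    and low: "\<And>i j. i < n \<Longrightarrow> j < n \<Longrightarrow> i > j + 1 \<Longrightarrow> A $$ (i, j) = 0"
begin

lemma hessenberg_lower_bandwidth: "lower_bandwidth_le A 1"
  using carr low by (auto simp: lower_bandwidth_le_def)

lemma hessenberg_pow_subdiag:
  "j + k < n \<Longrightarrow> (A ^\<^sub>m k) $$ (k + j, j) = 1"
proof (induction k arbitrary: j)
  case 0
  then show ?case using carr by simp
next
  case (Suc k)
  note band = lower_bandwidth_le_pow[OF carr hessenberg_lower_bandwidth, of k]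
  have "(A ^\<^sub>m Suc k) $$ (Suc k + j, j) = (A ^\<^sub>m k * A) $$ (Suc k + j, j)"
    by (simp only: pow_mat.simps)
  also have "\<dots> = (A ^\<^sub>m k) $$ (Suc k + j, j) * A $$ (j, j)
      + (A ^\<^sub>m k) $$ (Suc k + j, j + 1) * A $$ (j + 1, j)"
    using Suc.prems
    by (intro mult_lower_bandwidth_1_entry[OF carr _ band hessenberg_lower_bandwidth]) (use carr in auto)
  also have "\<dots> = 1"
    using band carr Suc.IH[of "Suc j"] Suc.prems sub[of j]
    by (simp add: lower_bandwidth_le_def)
  finally show ?case .
qed

lemma hessenberg_pow_diag_sum:
  "j + Suc k \<le> n \<Longrightarrow> (A ^\<^sub>m Suc k) $$ (k + j, j) = (\<Sum>t\<in>{j..<j + Suc k}. A $$ (t, t))"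
proof (induction k arbitrary: j)
  case 0
  then show ?case using carr by simp
next
  case (Suc k)
  note band = lower_bandwidth_le_pow[OF carr hessenberg_lower_bandwidth, of "Suc k"]
  have "(A ^\<^sub>m Suc (Suc k)) $$ (Suc k + j, j) = (A ^\<^sub>m Suc k * A) $$ (Suc k + j, j)"
    by (simp only: pow_mat.simps)
  also have "\<dots> = (A ^\<^sub>m Suc k) $$ (Suc k + j, j) * A $$ (j, j)
      + (A ^\<^sub>m Suc k) $$ (Suc k + j, j + 1) * A $$ (j + 1, j)"
    using Suc.prems
    by (intro mult_lower_bandwidth_1_entry[OF carr _ band hessenberg_lower_bandwidth]) (use carr in auto)
  also have "\<dots> = A $$ (j, j) + (\<Sum>t\<in>{Suc j..<Suc j + Suc k}. A $$ (t, t))"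
    using hessenberg_pow_subdiag[of j "Suc k"] Suc.IH[of "Suc j"] Suc.prems sub[of j]
    by (simp add: add.commute add.left_commute)
  also have "\<dots> = (\<Sum>t\<in>{j..<j + Suc (Suc k)}. A $$ (t, t))"
    by (simp add: sum.atLeast_Suc_lessThan)
  finally show ?case .
qed

end

theorem lemma3p4:
  fixes A :: "'a :: ring_1 mat" and n :: nat
  assumes carr: "A \<in> carrier_mat n n"
    and n2: "n \<ge> 2"
    and sub: "\<And>i. i + 1 < n \<Longrightarrow> A $$ (i + 1, i) = 1"
    and low: "\<And>i j. i < n \<Longrightarrow> j < n \<Longrightarrow> i > j + 1 \<Longrightarrow> A $$ (i, j) = 0"
  shows "(\<forall>k. 1 \<le> k \<and> k \<le> n \<longrightarrow>
            (\<forall>j. j + k \<le> n \<longrightarrow>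
                 (A ^\<^sub>m k) $$ (k + j - 1, j) = (\<Sum>t\<in>{j..<j + k}. A $$ (t, t))) \<and>
            (\<forall>j. j + k < n \<longrightarrow> (A ^\<^sub>m k) $$ (k + j, j) = 1) \<and>
            (\<forall>i j. i < n \<and> j < n \<and> i > k + j \<longrightarrow> (A ^\<^sub>m k) $$ (i, j) = 0))
      \<and> (\<forall>k. 1 \<le> k \<and> k \<le> n \<longrightarrow>
            (A ^\<^sub>m k) $$ (k - 1, 0) = (\<Sum>t<k. A $$ (t, t)))
      \<and> (A ^\<^sub>m n) $$ (n - 1, 0) = (\<Sum>t<n. A $$ (t, t))"
proof -
  have diag: "(A ^\<^sub>m k) $$ (k + j - 1, j) = (\<Sum>t\<in>{j..<j + k}. A $$ (t, t))"
    if "1 \<le> k" "j + k \<le> n" for j k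
    using hessenberg_pow_diag_sum[OF carr sub low, of j "k - 1"] that by simp
  have zero: "(A ^\<^sub>m k) $$ (i, j) = 0" if "i < n" "j < n" "i > k + j" for i j k
    using lower_bandwidth_le_pow[OF carr hessenberg_lower_bandwidth[OF carr sub low], of k] that carr
    by (simp add: lower_bandwidth_le_def)
  have corner: "(A ^\<^sub>m k) $$ (k - 1, 0) = (\<Sum>t<k. A $$ (t, t))" if "1 \<le> k" "k \<le> n" for k
    using diag[of k 0] that by (simp add: atLeast0LessThan)
  show ?thesis
    using diag zero corner hessenberg_pow_subdiag[OF carr sub low] n2 by auto
qed

end
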